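(* Let $f:\mathbb{R}\to\mathbb{C}$ be Lebesgue measurable. Suppose that for every trigonometric polynomial $u$ that is not identically zero, every finite subset $B=\{b_1,\ldots,b_n\}\subset\mathbb{R}_+$, and every $M>0$, the set \[ E_{u,M,B}=\Big\{x\in\mathbb{R}_+: |u(x)f(x)|>M\sum_{i=1}^n|f(x+b_i)|\Big\} \] has positive Lebesgue measure. Then $\mathcal G(f,\mathbb{R}^2)$ is linearly independent. Moreover, if for some $b>0$ this hypothesis is only assumed for finite subsets $B\subset b\mathbb{N}$ (and all nonzero trigonometric polynomials $u$ and all $M>0$), then $\mathcal G(f,\mathbb{R}\times b\mathbb{Z})$ is linearly independent.
   Context: $\mathbb{R}_+=(0,\infty)$. A trigonometric polynomial is a function $u(x)=\sum_{j=1}^m c_je^{2\pi i a_j x}$ with $a_j\in\mathbb{R}$, $c_j\in\mathbb{C}$ (not necessarily periodic). For $a,b\in\mathbb{R}$, $M_aT_bf(x)=e^{2\pi i a x}f(x-b)$, and for $\Lambda\subset\mathbb{R}^2$, $\mathcal G(f,\Lambda)=\{M_aT_bf:(a,b)\in\Lambda\}$. Measurable functions equal a.e. are identified; $\mathcal G(f,\Lambda)$ is linearly independent if for every finite $F\subset\Lambda$ and coefficients $c_{(a,b)}$, $(a,b)\in F$, not all zero, $\sum_{(a,b)\in F}c_{(a,b)}M_aT_bf$ is not zero almost everywhere. *)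

theory Defs
  imports "HOL-Analysis.Analysis"
begin

definition trig_poly :: "(real \<Rightarrow> complex) \<Rightarrow> bool" where
  "trig_poly u \<longleftrightarrow> (\<exists>A::real set. \<exists>c::real \<Rightarrow> complex. finite A \<and>
      u = (\<lambda>x. \<Sum>a\<in>A. c a * exp (2 * pi * \<i> * complex_of_real (a * x))))"

definition MT :: "real \<Rightarrow> real \<Rightarrow> (real \<Rightarrow> complex) \<Rightarrow> real \<Rightarrow> complex" where
  "MT a b f x = exp (2 * pi * \<i> * complex_of_real (a * x)) * f (x - b)"

definition gabor_lin_indep :: "(real \<Rightarrow> complex) \<Rightarrow> (real \<times> real) set \<Rightarrow> bool" where
  "gabor_lin_indep f \<Lambda> \<longleftrightarrow>
     (\<forall>F c. finite F \<and> F \<subseteq> \<Lambda> \<and> (\<exists>p\<in>F. c p \<noteq> (0::complex)) \<longrightarrow>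
        \<not> (AE x in lebesgue. (\<Sum>p\<in>F. c p * MT (fst p) (snd p) f x) = 0))"

definition E_set :: "(real \<Rightarrow> complex) \<Rightarrow> real \<Rightarrow> real set \<Rightarrow> (real \<Rightarrow> complex) \<Rightarrow> real set" where
  "E_set u M B f = {x. 0 < x \<and> cmod (u x * f x) > M * (\<Sum>b\<in>B. cmod (f (x + b)))}"

definition E_hyp :: "(real \<Rightarrow> complex) \<Rightarrow> real set \<Rightarrow> bool" where
  "E_hyp f S \<longleftrightarrow> (\<forall>u M B. trig_poly u \<and> u \<noteq> (\<lambda>_. 0) \<and> finite B \<and> B \<subseteq> S \<and> M > 0 \<longrightarrow>
      emeasure lebesgue (E_set u M B f) > 0)"

end

theory Submission
  imports Defs
begin

text \<open>
  Group a combination \<open>\<Sum> c(a,b) M\<^sub>a T\<^sub>b f\<close> that vanishes a.e. by time shifts: it becomes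
  \<open>\<Sum>\<^sub>b U\<^sub>b(x) f(x - b)\<close> with trigonometric polynomials \<open>U\<^sub>b\<close>, not all zero because
  exponentials with distinct frequencies are linearly independent. For the largest shift \<open>b\<^sub>1\<close>
  with \<open>U\<^sub>b\<^sub>1 \<noteq> 0\<close>, translating by \<open>b\<^sub>1\<close> gives a.e.
  \<open>|U\<^sub>b\<^sub>1(y + b\<^sub>1) f(y)| \<le> K \<Sum>\<^sub>b |f(y + (b\<^sub>1 - b))|\<close>, summed over the other
  shifts \<open>b\<close>, where \<open>K\<close> bounds all \<open>|U\<^sub>b|\<close>.
  The shifts \<open>b\<^sub>1 - b\<close> are positive, and lie in \<open>b\<nat>\<close> for shifts in \<open>b\<int>\<close>, so the set where this
  inequality fails has positive measure by hypothesis, a contradiction.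
\<close>

lemma AE_lebesgue_translate:
  fixes t :: "'a::euclidean_space"
  assumes "AE x in lebesgue. P x"
  shows "AE y in lebesgue. P (y + t)"
proof -
  from assms have "AE x in lborel. P x"
    by (simp add: AE_completion_iff)
  then obtain N where N: "N \<in> null_sets lborel" "{x. \<not> P x} \<subseteq> N"
    by (auto simp: eventually_ae_filter)
  have "{x. x - (-t) \<in> N} \<in> null_sets lborel"
    using N(1) by (rule null_sets_translation)
  moreover have "{y. \<not> P (y + t)} \<subseteq> {x. x - (-t) \<in> N}"
    using N(2) by auto
  ultimately have "AE y in lborel. P (y + t)"
    by (auto simp: eventually_ae_filter)
  then show ?thesis
    by (simp add: AE_completion_iff)
qed

abbreviation chi :: "real \<Rightarrow> real \<Rightarrow> complex" where
  "chi a x \<equiv> exp (2 * pi * \<i> * complex_of_real (a * x))"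

lemma chi_add: "chi a (x + t) = chi a t * chi a x"
  by (simp add: distrib_left exp_add[symmetric] algebra_simps)

lemma norm_chi [simp]: "cmod (chi a x) = 1"
  by (simp add: norm_exp_eq_Re)

lemma chi_half_period_neq:
  assumes "a \<noteq> a'"
  shows "chi a (1 / (2 * (a - a'))) \<noteq> chi a' (1 / (2 * (a - a')))"
proof
  let ?t = "1 / (2 * (a - a'))"
  assume eq: "chi a ?t = chi a' ?t"
  have "2 * pi * \<i> * complex_of_real (a * ?t) = 2 * pi * \<i> * complex_of_real (a' * ?t) + pi * \<i>"
    using assms by (simp add: field_simps)
  then have "chi a ?t = chi a' ?t * exp (pi * \<i>)"
    by (simp add: exp_add)
  with eq have "exp (pi * \<i>) = 1"
    by simp
  then show False
    by (simp add: exp_eq_1)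
qed

text \<open>
  Induction on the set of frequencies: \<open>u(x + t) - e\<^sub>a\<^sub>0(t) u(x)\<close> kills the frequency \<open>a\<^sub>0\<close>
  and, for the half period \<open>t\<close> of \<open>a - a\<^sub>0\<close>, keeps the coefficient of \<open>a\<close> nonzero.
\<close>
lemma chi_sum_eq_0_imp_coeff_eq_0:
  assumes "finite A" "\<forall>x. (\<Sum>a\<in>A. c a * chi a x) = 0" "a \<in> A"
  shows "c a = 0"
  using assms
proof (induction A arbitrary: c a rule: finite_induct)
  case empty
  then show ?case by simp
next
  case (insert a0 A c a)
  have sum0: "(\<Sum>a\<in>A. c a * chi a x) + c a0 * chi a0 x = 0" for x
    using insert.prems(1) insert.hyps by (simp add: add.commute)
  have coeff_A: "c a = 0" if "a \<in> A" for a
  proof -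
    define t where "t = 1 / (2 * (a - a0))"
    have "\<forall>x. (\<Sum>b\<in>A. (c b * (chi b t - chi a0 t)) * chi b x) = 0"
    proof
      fix x
      have "(\<Sum>b\<in>A. (c b * (chi b t - chi a0 t)) * chi b x)
          = ((\<Sum>b\<in>A. c b * chi b (x + t)) + c a0 * chi a0 (x + t))
            - chi a0 t * ((\<Sum>b\<in>A. c b * chi b x) + c a0 * chi a0 x)"
        unfolding chi_add by (simp only: algebra_simps sum_distrib_left sum_subtractf sum.distrib)
      also have "\<dots> = 0"
        using sum0[of x] sum0[of "x + t"] by simp
      finally show "(\<Sum>b\<in>A. (c b * (chi b t - chi a0 t)) * chi b x) = 0" .
    qed
    from insert.IH[OF this that] have "c a * (chi a t - chi a0 t) = 0" .
    moreover have "a \<noteq> a0"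
      using that insert.hyps by auto
    ultimately show ?thesis
      using chi_half_period_neq[of a a0] unfolding t_def by simp
  qed
  then have "(\<Sum>a\<in>A. c a * chi a 0) = 0"
    by simp
  with sum0[of 0] have "c a0 = 0"
    by simp
  with coeff_A insert.prems(2) show ?case
    by auto
qed

lemma trig_poly_sum: "finite A \<Longrightarrow> trig_poly (\<lambda>x. \<Sum>a\<in>A. c a * chi a x)"
  unfolding trig_poly_def by blast

lemma trig_poly_translate:
  assumes "trig_poly u"
  shows "trig_poly (\<lambda>x. u (x + t))"
proof -
  from assms obtain A c where "finite A" and u: "u = (\<lambda>x. \<Sum>a\<in>A. c a * chi a x)"
    unfolding trig_poly_def by blast
  then have "(\<lambda>x. u (x + t)) = (\<lambda>x. \<Sum>a\<in>A. (c a * chi a t) * chi a x)"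
    unfolding u chi_add by (simp only: mult.assoc)
  with \<open>finite A\<close> show ?thesis
    by (simp only: trig_poly_sum)
qed

definition shift_coeff :: "(real \<times> real) set \<Rightarrow> (real \<times> real \<Rightarrow> complex) \<Rightarrow> real \<Rightarrow> real \<Rightarrow> complex"
  where "shift_coeff F c b x = (\<Sum>p\<in>{p\<in>F. snd p = b}. c p * chi (fst p) x)"

lemma shift_coeff_by_frequency:
  "shift_coeff F c b x = (\<Sum>a\<in>fst ` {p\<in>F. snd p = b}. c (a, b) * chi a x)"
proof -
  have "inj_on fst {p\<in>F. snd p = b}"
    by (auto simp: inj_on_def prod_eq_iff)
  then show ?thesis
    unfolding shift_coeff_def by (auto simp: sum.reindex intro!: sum.cong)
qed

lemma trig_poly_shift_coeff: "finite F \<Longrightarrow> trig_poly (shift_coeff F c b)"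
  unfolding shift_coeff_by_frequency[abs_def] by (rule trig_poly_sum) simp

lemma shift_coeff_nonzero:
  assumes "finite F" "p \<in> F" "c p \<noteq> 0"
  shows "shift_coeff F c (snd p) \<noteq> (\<lambda>_. 0)"
proof
  assume "shift_coeff F c (snd p) = (\<lambda>_. 0)"
  then have "\<forall>x. (\<Sum>a\<in>fst ` {q\<in>F. snd q = snd p}. c (a, snd p) * chi a x) = 0"
    by (metis shift_coeff_by_frequency)
  with assms(1,2) have "c (fst p, snd p) = 0"
    by (intro chi_sum_eq_0_imp_coeff_eq_0) auto
  with assms(3) show False
    by simp
qed

lemma norm_shift_coeff_le:
  assumes "finite F"
  shows "cmod (shift_coeff F c b x) \<le> (\<Sum>p\<in>F. cmod (c p))"
proof -
  have "cmod (shift_coeff F c b x) \<le> (\<Sum>p\<in>{p\<in>F. snd p = b}. cmod (c p * chi (fst p) x))"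
    unfolding shift_coeff_def by (rule norm_sum)
  also have "\<dots> = (\<Sum>p\<in>{p\<in>F. snd p = b}. cmod (c p))"
    by (simp add: norm_mult)
  also have "\<dots> \<le> (\<Sum>p\<in>F. cmod (c p))"
    using assms by (intro sum_mono2) auto
  finally show ?thesis .
qed

lemma gabor_sum_by_shift:
  assumes "finite F"
    and "{b \<in> snd ` F. shift_coeff F c b \<noteq> (\<lambda>_. 0)} \<subseteq> Bs" "Bs \<subseteq> snd ` F"
  shows "(\<Sum>p\<in>F. c p * MT (fst p) (snd p) f x) = (\<Sum>b\<in>Bs. shift_coeff F c b x * f (x - b))"
proof -
  have "(\<Sum>p\<in>F. c p * MT (fst p) (snd p) f x)
      = (\<Sum>b\<in>snd ` F. \<Sum>p\<in>{p\<in>F. snd p = b}. c p * MT (fst p) (snd p) f x)"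
    using assms(1) by (rule sum.image_gen)
  also have "\<dots> = (\<Sum>b\<in>snd ` F. shift_coeff F c b x * f (x - b))"
    unfolding shift_coeff_def MT_def by (auto simp: sum_distrib_right mult.assoc intro!: sum.cong)
  also have "\<dots> = (\<Sum>b\<in>Bs. shift_coeff F c b x * f (x - b))"
    using assms by (intro sum.mono_neutral_right) auto
  finally show ?thesis .
qed

lemma dominant_shift_bound:
  fixes U :: "real \<Rightarrow> real \<Rightarrow> complex"
  assumes "finite Bs" "b1 \<in> Bs" "\<And>b x. cmod (U b x) \<le> K"
    and "(\<Sum>b\<in>Bs. U b (y + b1) * f (y + b1 - b)) = 0"
  shows "cmod (U b1 (y + b1) * f y) \<le> K * (\<Sum>d\<in>(\<lambda>b. b1 - b) ` (Bs - {b1}). cmod (f (y + d)))"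
proof -
  have "U b1 (y + b1) * f y + (\<Sum>b\<in>Bs - {b1}. U b (y + b1) * f (y + b1 - b)) = 0"
    using assms(4) sum.remove[OF assms(1,2), of "\<lambda>b. U b (y + b1) * f (y + b1 - b)"] by simp
  then have "cmod (U b1 (y + b1) * f y) = cmod (\<Sum>b\<in>Bs - {b1}. U b (y + b1) * f (y + b1 - b))"
    by (metis add_eq_0_iff norm_minus_cancel)
  also have "\<dots> \<le> (\<Sum>b\<in>Bs - {b1}. cmod (U b (y + b1) * f (y + b1 - b)))"
    by (rule norm_sum)
  also have "\<dots> \<le> (\<Sum>b\<in>Bs - {b1}. K * cmod (f (y + (b1 - b))))"
    using assms(3) by (intro sum_mono) (simp add: norm_mult mult_right_mono add_diff_eq)
  also have "\<dots> = K * (\<Sum>d\<in>(\<lambda>b. b1 - b) ` (Bs - {b1}). cmod (f (y + d)))"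
    by (simp add: sum.reindex inj_on_def sum_distrib_left)
  finally show ?thesis .
qed

lemma E_set_dominant_shift_null:
  fixes U :: "real \<Rightarrow> real \<Rightarrow> complex"
  assumes "finite Bs" "b1 \<in> Bs" "\<And>b x. cmod (U b x) \<le> K"
    and "AE x in lebesgue. (\<Sum>b\<in>Bs. U b x * f (x - b)) = 0"
  shows "E_set (\<lambda>y. U b1 (y + b1)) K ((\<lambda>b. b1 - b) ` (Bs - {b1})) f \<in> null_sets lebesgue"
proof -
  have "AE y in lebesgue. (\<Sum>b\<in>Bs. U b (y + b1) * f (y + b1 - b)) = 0"
    using AE_lebesgue_translate[OF assms(4), of b1] by simp
  then obtain N where N: "N \<in> null_sets lebesgue"
      "{y. (\<Sum>b\<in>Bs. U b (y + b1) * f (y + b1 - b)) \<noteq> 0} \<subseteq> N"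
    by (auto simp: eventually_ae_filter)
  have "E_set (\<lambda>y. U b1 (y + b1)) K ((\<lambda>b. b1 - b) ` (Bs - {b1})) f \<subseteq> N"
  proof
    fix y
    assume y: "y \<in> E_set (\<lambda>y. U b1 (y + b1)) K ((\<lambda>b. b1 - b) ` (Bs - {b1})) f"
    show "y \<in> N"
    proof (rule ccontr)
      assume "y \<notin> N"
      with N(2) have "(\<Sum>b\<in>Bs. U b (y + b1) * f (y + b1 - b)) = 0"
        by blast
      then have "cmod (U b1 (y + b1) * f y)
          \<le> K * (\<Sum>d\<in>(\<lambda>b. b1 - b) ` (Bs - {b1}). cmod (f (y + d)))"
        by (rule dominant_shift_bound[OF assms(1-3)])
      with y show False
        by (simp add: E_set_def)
    qed
  qed
  with N(1) show ?thesis
    using null_sets_completion_subset by blast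
qed

lemma not_AE_shift_sum_eq_0:
  fixes U :: "real \<Rightarrow> real \<Rightarrow> complex"
  assumes hyp: "E_hyp f P"
    and Bs: "finite Bs" "b1 \<in> Bs" "\<And>b. b \<in> Bs \<Longrightarrow> b \<noteq> b1 \<Longrightarrow> b1 - b \<in> P"
    and U: "trig_poly (U b1)" "U b1 \<noteq> (\<lambda>_. 0)" "\<And>b x. cmod (U b x) \<le> K" "K > 0"
  shows "\<not> (AE x in lebesgue. (\<Sum>b\<in>Bs. U b x * f (x - b)) = 0)"
proof
  define D where "D = (\<lambda>b. b1 - b) ` (Bs - {b1})"
  assume "AE x in lebesgue. (\<Sum>b\<in>Bs. U b x * f (x - b)) = 0"
  then have null: "E_set (\<lambda>y. U b1 (y + b1)) K D f \<in> null_sets lebesgue"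
    unfolding D_def by (rule E_set_dominant_shift_null[OF Bs(1,2) U(3)])
  have "trig_poly (\<lambda>y. U b1 (y + b1))"
    using U(1) by (rule trig_poly_translate)
  moreover have "(\<lambda>y. U b1 (y + b1)) \<noteq> (\<lambda>_. 0)"
  proof
    assume "(\<lambda>y. U b1 (y + b1)) = (\<lambda>_. 0)"
    then have "U b1 = (\<lambda>_. 0)"
      by (metis diff_add_cancel)
    with U(2) show False ..
  qed
  moreover have "finite D" "D \<subseteq> P"
    using Bs by (auto simp: D_def)
  ultimately have "emeasure lebesgue (E_set (\<lambda>y. U b1 (y + b1)) K D f) > 0"
    using hyp U(4) unfolding E_hyp_def by simp
  with null show False
    by (simp add: null_setsD1)
qed

theorem gabor_lin_indep_if_E_hyp:
  assumes hyp: "E_hyp f P"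
    and shifts: "\<And>b b'. b \<in> snd ` \<Lambda> \<Longrightarrow> b' \<in> snd ` \<Lambda> \<Longrightarrow> b < b' \<Longrightarrow> b' - b \<in> P"
  shows "gabor_lin_indep f \<Lambda>"
  unfolding gabor_lin_indep_def
proof (intro allI impI notI)
  fix F :: "(real \<times> real) set" and c :: "real \<times> real \<Rightarrow> complex"
  assume "finite F \<and> F \<subseteq> \<Lambda> \<and> (\<exists>p\<in>F. c p \<noteq> 0)"
    and AE0: "AE x in lebesgue. (\<Sum>p\<in>F. c p * MT (fst p) (snd p) f x) = 0"
  then obtain p0 where F: "finite F" "F \<subseteq> \<Lambda>" and p0: "p0 \<in> F" "c p0 \<noteq> 0"
    by auto
  define U where "U = shift_coeff F c"
  define Bs where "Bs = {b \<in> snd ` F. U b \<noteq> (\<lambda>_. 0)}"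
  define b1 where "b1 = Max Bs"
  have "finite Bs"
    using F(1) by (simp add: Bs_def)
  moreover have "snd p0 \<in> Bs"
    using shift_coeff_nonzero[of F p0 c] F(1) p0 by (simp add: Bs_def U_def)
  ultimately have b1: "b1 \<in> Bs" "\<And>b. b \<in> Bs \<Longrightarrow> b \<le> b1"
    unfolding b1_def by (auto intro: Max_in)
  have "\<not> (AE x in lebesgue. (\<Sum>b\<in>Bs. U b x * f (x - b)) = 0)"
  proof (rule not_AE_shift_sum_eq_0[OF hyp \<open>finite Bs\<close> b1(1)])
    show "b1 - b \<in> P" if "b \<in> Bs" "b \<noteq> b1" for b
      using that b1 F(2) by (intro shifts) (auto simp: Bs_def order.strict_iff_order)
    show "trig_poly (U b1)"
      unfolding U_def using F(1) by (rule trig_poly_shift_coeff)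
    show "U b1 \<noteq> (\<lambda>_. 0)"
      using b1(1) by (simp add: Bs_def)
    show "cmod (U b x) \<le> 1 + (\<Sum>p\<in>F. cmod (c p))" for b x
      using norm_shift_coeff_le[OF F(1)] by (simp add: U_def add_increasing)
  qed (simp add: add_pos_nonneg sum_nonneg)
  moreover have "AE x in lebesgue. (\<Sum>b\<in>Bs. U b x * f (x - b)) = 0"
    using AE0 gabor_sum_by_shift[OF F(1), of c Bs] by (simp add: Bs_def U_def)
  ultimately show False
    by contradiction
qed

theorem theorem3p1:
  fixes f :: "real \<Rightarrow> complex"
  assumes "f \<in> borel_measurable lebesgue"
  shows "(E_hyp f {0<..} \<longrightarrow> gabor_lin_indep f UNIV)
    \<and> (\<forall>b::real. b > 0 \<and> E_hyp f {b * real n | n. n \<ge> 1}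
           \<longrightarrow> gabor_lin_indep f (UNIV \<times> {b * real_of_int k | k. True}))"
proof (intro conjI allI impI)
  assume "E_hyp f {0<..}"
  then show "gabor_lin_indep f UNIV"
    by (rule gabor_lin_indep_if_E_hyp) auto
next
  fix b :: real
  assume b: "b > 0 \<and> E_hyp f {b * real n | n. n \<ge> 1}"
  show "gabor_lin_indep f (UNIV \<times> {b * real_of_int k | k. True})"
  proof (rule gabor_lin_indep_if_E_hyp[OF conjunct2[OF b]])
    fix x y
    assume "x \<in> snd ` (UNIV \<times> {b * real_of_int k | k. True})"
      and "y \<in> snd ` (UNIV \<times> {b * real_of_int k | k. True})" and "x < y"
    then obtain k k' :: int where "x = b * k" "y = b * k'" and "k < k'"
      using b by (auto simp: mult_less_cancel_left_pos)
    then have "y - x = b * real (nat (k' - k))" "nat (k' - k) \<ge> 1"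
      by (simp_all add: algebra_simps)
    then show "y - x \<in> {b * real n | n. n \<ge> 1}"
      by blast
  qed
qed

end
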